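(* Let $n,m$ be positive integers, $\Lambda:\mathbb{C}^{n\times n}\to\mathbb{C}^{m\times m}$ linear and $Y\in\mathbb{C}^{m\times m}$. For a real parameter $k\ge1$, call a pair $(\Phi_I,\Phi_V)$ of Hermitian operators on $\mathcal{H}_{A_1}\otimes\mathcal{H}_{B_1}=\mathbb{C}^n\otimes\mathbb{C}^n$ $k$-feasible if \[ \Phi_V=V\Phi_I,\quad \Phi_I+\Phi_V\ge0,\quad \Phi_I-\Phi_V\ge0,\quad \Phi_I^{T_{A_1}}+k\Phi_V^{T_{A_1}}\ge0,\quad \Phi_I^{T_{A_1}}\ge0, \] \[ k^2\operatorname{Tr}(\Phi_I)+k\operatorname{Tr}(\Phi_V)=1,\qquad (\Lambda_{A_1}\otimes\mathrm{id}_{B_1})(k\Phi_I+\Phi_V)=Y\otimes\operatorname{Tr}_{A_1}(k\Phi_I+\Phi_V). \] If $(\Phi_I,\Phi_V)$ is $k$-feasible with $k\ge1$, then for every real $k'\ge k$ there is a $k'$-feasible pair $(\Phi_I',\Phi_V')$ with $k'^2\Phi_I'+k'\Phi_V'=k^2\Phi_I+k\Phi_V$.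
   Context: $V$ is the swap operator on $\mathbb{C}^n\otimes\mathbb{C}^n$; $T_{A_1}$ denotes the partial transpose on the first factor; $\operatorname{Tr}_{A_1}$ is the partial trace over the first factor; $\Lambda_{A_1}\otimes\mathrm{id}_{B_1}$ applies $\Lambda$ to the first factor; $\ge0$ means positive semidefinite. (This is the symmetry-reduced second level of the hierarchy with partial-transpose constraints, in which the rank bound $k$ appears as a parameter.) *)

theory Defs
  imports Complex_Main
begin

text \<open>Operators on C^n (x) C^n are indexed by 'n \<times> 'n,
 where the first component is the factor A1 and the second is B1.\<close>

type_synonym 'i cmat = "'i \<Rightarrow> 'i \<Rightarrow> complex"

definition mmul :: "('i::finite) cmat \<Rightarrow> 'i cmat \<Rightarrow> 'i cmat" where
  "mmul A B = (\<lambda>i j. \<Sum>k\<in>UNIV. A i k * B k j)"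

definition madd :: "'i cmat \<Rightarrow> 'i cmat \<Rightarrow> 'i cmat" where
  "madd A B = (\<lambda>i j. A i j + B i j)"

definition msub :: "'i cmat \<Rightarrow> 'i cmat \<Rightarrow> 'i cmat" where
  "msub A B = (\<lambda>i j. A i j - B i j)"

definition msmult :: "complex \<Rightarrow> 'i cmat \<Rightarrow> 'i cmat" where
  "msmult c A = (\<lambda>i j. c * A i j)"

definition mtrace :: "('i::finite) cmat \<Rightarrow> complex" where
  "mtrace A = (\<Sum>i\<in>UNIV. A i i)"

definition hermitian :: "'i cmat \<Rightarrow> bool" where
  "hermitian A \<longleftrightarrow> (\<forall>i j. A j i = cnj (A i j))"

definition psd :: "('i::finite) cmat \<Rightarrow> bool" where
  "psd A \<longleftrightarrow> hermitian A \<and>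
     (\<forall>v :: 'i \<Rightarrow> complex. 0 \<le> Re (\<Sum>i\<in>UNIV. \<Sum>j\<in>UNIV. cnj (v i) * A i j * v j))"

definition swapop :: "('n \<times> 'n) cmat" where
  "swapop = (\<lambda>(a,b) (c,d). if a = d \<and> b = c then 1 else 0)"

definition ptransA :: "('a \<times> 'b) cmat \<Rightarrow> ('a \<times> 'b) cmat" where
  "ptransA X = (\<lambda>(a,b) (c,d). X (c,b) (a,d))"

definition ptraceA :: "(('a::finite) \<times> 'b) cmat \<Rightarrow> 'b cmat" where
  "ptraceA X = (\<lambda>b d. \<Sum>a\<in>UNIV. X (a,b) (a,d))"

definition tensor :: "'a cmat \<Rightarrow> 'b cmat \<Rightarrow> ('a \<times> 'b) cmat" where
  "tensor Y Z = (\<lambda>(i,b) (j,d). Y i j * Z b d)"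

definition clinear_map :: "('a cmat \<Rightarrow> 'c cmat) \<Rightarrow> bool" where
  "clinear_map L \<longleftrightarrow> (\<forall>A B. L (madd A B) = madd (L A) (L B)) \<and>
                     (\<forall>c A. L (msmult c A) = msmult c (L A))"

text \<open>(Lambda_A1 (x) id_B1) X: block (b,d) of X on the first factor is mapped by Lambda.\<close>
definition apply_A :: "('a cmat \<Rightarrow> 'c cmat) \<Rightarrow> ('a \<times> 'b) cmat \<Rightarrow> ('c \<times> 'b) cmat" where
  "apply_A L X = (\<lambda>(i,b) (j,d). L (\<lambda>a c. X (a,b) (c,d)) i j)"

definition k_feasible ::
  "('n::finite cmat \<Rightarrow> ('m::finite) cmat) \<Rightarrow> 'm cmat \<Rightarrow> real \<Rightarrow>
   ('n \<times> 'n) cmat \<Rightarrow> ('n \<times> 'n) cmat \<Rightarrow> bool" where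
  "k_feasible L Y k PI PV \<longleftrightarrow>
     hermitian PI \<and> hermitian PV \<and>
     PV = mmul swapop PI \<and>
     psd (madd PI PV) \<and>
     psd (msub PI PV) \<and>
     psd (madd (ptransA PI) (msmult (complex_of_real k) (ptransA PV))) \<and>
     psd (ptransA PI) \<and>
     (complex_of_real k)^2 * mtrace PI + complex_of_real k * mtrace PV = 1 \<and>
     apply_A L (madd (msmult (complex_of_real k) PI) PV)
       = tensor Y (ptraceA (madd (msmult (complex_of_real k) PI) PV))"

end

theory Submission
  imports Defs
begin

text \<open>Since \<open>V\<^sup>2 = 1\<close> and \<open>\<Phi>\<^sub>V = V \<Phi>\<^sub>I\<close>, the pair \<open>\<Phi>\<^sub>I' = a \<Phi>\<^sub>I + b \<Phi>\<^sub>V\<close>,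
  \<open>\<Phi>\<^sub>V' = b \<Phi>\<^sub>I + a \<Phi>\<^sub>V\<close> again satisfies \<open>\<Phi>\<^sub>V' = V \<Phi>\<^sub>I'\<close>, and
  \<open>\<Phi>\<^sub>I' \<plusminus> \<Phi>\<^sub>V' = (a \<plusminus> b) (\<Phi>\<^sub>I \<plusminus> \<Phi>\<^sub>V)\<close>.  Choosing \<open>a, b\<close> with
  \<open>k' a + b = k\<^sup>2/k'\<close> and \<open>a + k' b = k/k'\<close> makes \<open>k'\<^sup>2 \<Phi>\<^sub>I' + k' \<Phi>\<^sub>V'\<close> equal to
  \<open>k\<^sup>2 \<Phi>\<^sub>I + k \<Phi>\<^sub>V\<close>, and turns both \<open>k' \<Phi>\<^sub>I' + \<Phi>\<^sub>V'\<close> and the partially transposed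
  \<open>\<Phi>\<^sub>I' + k' \<Phi>\<^sub>V'\<close> into the multiples by \<open>k/k'\<close> of their unprimed counterparts.
  For \<open>1 \<le> k \<le> k'\<close> the solution satisfies \<open>0 \<le> b \<le> a\<close>, which gives every
  positivity constraint; for the partial transpose of \<open>\<Phi>\<^sub>I'\<close> one writes it as
  \<open>(a - b/k) \<Phi>\<^sub>I\<^sup>T + (b/k) (\<Phi>\<^sub>I\<^sup>T + k \<Phi>\<^sub>V\<^sup>T)\<close>.\<close>

definition mcomb :: "real \<Rightarrow> 'i cmat \<Rightarrow> real \<Rightarrow> 'i cmat \<Rightarrow> 'i cmat" where
  "mcomb a A b B = madd (msmult (complex_of_real a) A) (msmult (complex_of_real b) B)"

lemma mcomb_apply: "mcomb a A b B i j = complex_of_real a * A i j + complex_of_real b * B i j"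
  by (simp add: mcomb_def madd_def msmult_def)

lemma madd_eq_mcomb: "madd A B = mcomb 1 A 1 B"
  by (simp add: fun_eq_iff mcomb_apply madd_def)

lemma msub_eq_mcomb: "msub A B = mcomb 1 A (-1) B"
  by (simp add: fun_eq_iff mcomb_apply msub_def)

lemma madd_msmult_left_eq_mcomb: "madd (msmult (complex_of_real a) A) B = mcomb a A 1 B"
  by (simp add: fun_eq_iff mcomb_apply madd_def msmult_def)

lemma madd_msmult_right_eq_mcomb: "madd A (msmult (complex_of_real b) B) = mcomb 1 A b B"
  by (simp add: fun_eq_iff mcomb_apply madd_def msmult_def)

lemma mcomb_commute: "mcomb a A b B = mcomb b B a A"
  by (simp add: fun_eq_iff mcomb_apply)

lemma mcomb_scale: "mcomb (c * a) A (c * b) B = msmult (complex_of_real c) (mcomb a A b B)"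
  by (simp add: fun_eq_iff mcomb_apply msmult_def algebra_simps)

lemma mcomb_mcomb:
  "mcomb u (mcomb a A b B) v (mcomb c A d B) = mcomb (u * a + v * c) A (u * b + v * d) B"
  by (simp add: fun_eq_iff mcomb_apply algebra_simps)

lemma mcomb_mcomb_right: "mcomb u A v (mcomb c A d B) = mcomb (u + v * c) A (v * d) B"
  by (simp add: fun_eq_iff mcomb_apply algebra_simps)

lemma hermitian_madd:
  assumes "hermitian A" "hermitian B"
  shows "hermitian (madd A B)"
  using assms unfolding hermitian_def madd_def by (metis complex_cnj_add)

lemma hermitian_msmult:
  assumes "hermitian A"
  shows "hermitian (msmult (complex_of_real c) A)"
  using assms unfolding hermitian_def msmult_def by (metis complex_cnj_mult complex_cnj_complex_of_real)

lemma hermitian_mcomb: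
  assumes "hermitian A" "hermitian B"
  shows "hermitian (mcomb a A b B)"
  using assms by (simp add: mcomb_def hermitian_madd hermitian_msmult)

lemma psd_madd:
  assumes "psd A" "psd B"
  shows "psd (madd A B)"
proof -
  have "hermitian (madd A B)"
    using assms by (simp add: psd_def hermitian_madd)
  moreover have "(\<Sum>i\<in>UNIV. \<Sum>j\<in>UNIV. cnj (v i) * madd A B i j * v j)
      = (\<Sum>i\<in>UNIV. \<Sum>j\<in>UNIV. cnj (v i) * A i j * v j)
        + (\<Sum>i\<in>UNIV. \<Sum>j\<in>UNIV. cnj (v i) * B i j * v j)" for v :: "'a \<Rightarrow> complex"
    by (simp add: madd_def algebra_simps sum.distrib)
  ultimately show ?thesis
    using assms by (simp add: psd_def add_nonneg_nonneg)
qed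

lemma psd_msmult:
  assumes "psd A" "0 \<le> c"
  shows "psd (msmult (complex_of_real c) A)"
proof -
  have "hermitian (msmult (complex_of_real c) A)"
    using assms by (simp add: psd_def hermitian_msmult)
  moreover have "(\<Sum>i\<in>UNIV. \<Sum>j\<in>UNIV. cnj (v i) * msmult (complex_of_real c) A i j * v j)
      = complex_of_real c * (\<Sum>i\<in>UNIV. \<Sum>j\<in>UNIV. cnj (v i) * A i j * v j)"
    for v :: "'a \<Rightarrow> complex"
    by (simp add: msmult_def algebra_simps sum_distrib_left)
  ultimately show ?thesis
    using assms by (simp add: psd_def)
qed

lemma psd_mcomb:
  assumes "psd A" "psd B" "0 \<le> a" "0 \<le> b"
  shows "psd (mcomb a A b B)"
  using assms by (simp add: mcomb_def psd_madd psd_msmult)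

lemma ptransA_mcomb: "ptransA (mcomb a A b B) = mcomb a (ptransA A) b (ptransA B)"
  by (simp add: fun_eq_iff ptransA_def mcomb_apply)

lemma mtrace_mcomb:
  "mtrace (mcomb a A b B) = complex_of_real a * mtrace A + complex_of_real b * mtrace B"
  by (simp add: mtrace_def mcomb_apply sum.distrib sum_distrib_left)

lemma mmul_swapop: "mmul swapop X = (\<lambda>(a, b) j. X (b, a) j)"
proof (intro ext, clarify)
  fix a b :: 'a and j
  have "mmul swapop X (a, b) j = (\<Sum>k\<in>UNIV. if k = (b, a) then X k j else 0)"
    unfolding mmul_def swapop_def by (intro sum.cong) (auto split: if_splits)
  then show "mmul swapop X (a, b) j = X (b, a) j" by simp
qed

lemma mmul_swapop_swapop [simp]: "mmul swapop (mmul swapop X) = X"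
  by (simp add: mmul_swapop fun_eq_iff)

lemma mmul_swapop_mcomb:
  "mmul swapop (mcomb a A b B) = mcomb a (mmul swapop A) b (mmul swapop B)"
  by (simp add: mmul_swapop fun_eq_iff mcomb_apply)

lemma apply_A_msmult:
  assumes "clinear_map L"
  shows "apply_A L (msmult c X) = msmult c (apply_A L X)"
proof -
  have "(\<lambda>a a'. msmult c X (a, b) (a', d)) = msmult c (\<lambda>a a'. X (a, b) (a', d))" for b d
    by (simp add: msmult_def)
  then show ?thesis
    using assms by (simp add: fun_eq_iff apply_A_def clinear_map_def msmult_def)
qed

lemma ptraceA_msmult: "ptraceA (msmult c X) = msmult c (ptraceA X)"
  by (simp add: fun_eq_iff ptraceA_def msmult_def sum_distrib_left)

lemma tensor_msmult: "tensor Y (msmult c X) = msmult c (tensor Y X)"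
  by (simp add: fun_eq_iff tensor_def msmult_def)

lemma k_feasible_mcomb:
  "k_feasible L Y k PI PV \<longleftrightarrow>
     hermitian PI \<and> hermitian PV \<and> PV = mmul swapop PI \<and>
     psd (mcomb 1 PI 1 PV) \<and> psd (mcomb 1 PI (-1) PV) \<and>
     psd (mcomb 1 (ptransA PI) k (ptransA PV)) \<and> psd (ptransA PI) \<and>
     mtrace (mcomb (k\<^sup>2) PI k PV) = 1 \<and>
     apply_A L (mcomb k PI 1 PV) = tensor Y (ptraceA (mcomb k PI 1 PV))"
  by (simp add: k_feasible_def mtrace_mcomb madd_eq_mcomb [of PI PV] msub_eq_mcomb
      madd_msmult_left_eq_mcomb madd_msmult_right_eq_mcomb)

lemma rescaled_pair_invariant:
  assumes "k' * a + b = k\<^sup>2 / k'" "a + k' * b = k / k'" "k' \<noteq> 0"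
  shows "mcomb (k'\<^sup>2) (mcomb a A b B) k' (mcomb b A a B) = mcomb (k\<^sup>2) A k B"
proof -
  have "k'\<^sup>2 * a + k' * b = k\<^sup>2" "k'\<^sup>2 * b + k' * a = k"
    using assms by (simp_all add: field_simps power2_eq_square)
  then show ?thesis by (simp add: mcomb_mcomb)
qed

lemma k_feasible_rescale:
  assumes L: "clinear_map L" and feasible: "k_feasible L Y k PI PV"
    and "1 \<le> k" "0 < k'" "0 \<le> b" "b \<le> a"
    and coeffs: "k' * a + b = k\<^sup>2 / k'" "a + k' * b = k / k'"
  shows "k_feasible L Y k' (mcomb a PI b PV) (mcomb b PI a PV)"
proof -
  let ?PI' = "mcomb a PI b PV" and ?PV' = "mcomb b PI a PV"
  let ?TI = "ptransA PI" and ?TV = "ptransA PV"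
  have hI: "hermitian PI" and hV: "hermitian PV" and swap: "PV = mmul swapop PI"
    and psd_plus: "psd (mcomb 1 PI 1 PV)" and psd_minus: "psd (mcomb 1 PI (-1) PV)"
    and psd_pt: "psd (mcomb 1 ?TI k ?TV)" and psd_ptI: "psd ?TI"
    and trace: "mtrace (mcomb (k\<^sup>2) PI k PV) = 1"
    and channel: "apply_A L (mcomb k PI 1 PV) = tensor Y (ptraceA (mcomb k PI 1 PV))"
    using feasible unfolding k_feasible_mcomb by blast+
  have swap': "mmul swapop ?PI' = ?PV'"
    using swap by (simp add: mmul_swapop_mcomb mcomb_commute)
  have plus': "mcomb 1 ?PI' 1 ?PV' = msmult (complex_of_real (a + b)) (mcomb 1 PI 1 PV)"
    unfolding mcomb_mcomb mcomb_scale [symmetric] by (simp add: algebra_simps)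
  have minus': "mcomb 1 ?PI' (-1) ?PV' = msmult (complex_of_real (a - b)) (mcomb 1 PI (-1) PV)"
    unfolding mcomb_mcomb mcomb_scale [symmetric] by (simp add: algebra_simps)
  have pt': "mcomb 1 (ptransA ?PI') k' (ptransA ?PV')
      = msmult (complex_of_real (k / k')) (mcomb 1 ?TI k ?TV)"
    unfolding ptransA_mcomb mcomb_mcomb mcomb_scale [symmetric]
    using coeffs by (simp add: power2_eq_square algebra_simps)
  have ptI': "ptransA ?PI' = mcomb (a - b / k) ?TI (b / k) (mcomb 1 ?TI k ?TV)"
    using \<open>1 \<le> k\<close> by (simp add: ptransA_mcomb mcomb_mcomb_right)
  have channel': "mcomb k' ?PI' 1 ?PV' = msmult (complex_of_real (k / k')) (mcomb k PI 1 PV)"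
    unfolding mcomb_mcomb mcomb_scale [symmetric]
    using coeffs by (simp add: power2_eq_square algebra_simps)
  have "b / k \<le> a"
    using \<open>1 \<le> k\<close> \<open>0 \<le> b\<close> \<open>b \<le> a\<close> mult_left_mono [of 1 k a]
    by (simp add: mult_imp_div_pos_le)
  show ?thesis
    unfolding k_feasible_mcomb
  proof (intro conjI)
    show "hermitian ?PI'" "hermitian ?PV'"
      using hI hV by (simp_all add: hermitian_mcomb)
    show "?PV' = mmul swapop ?PI'"
      using swap' by simp
    show "psd (mcomb 1 ?PI' 1 ?PV')"
      unfolding plus' using psd_plus \<open>0 \<le> b\<close> \<open>b \<le> a\<close> by (intro psd_msmult) simp_all
    show "psd (mcomb 1 ?PI' (-1) ?PV')"
      unfolding minus' using psd_minus \<open>b \<le> a\<close> by (intro psd_msmult) simp_all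
    show "psd (mcomb 1 (ptransA ?PI') k' (ptransA ?PV'))"
      unfolding pt' using psd_pt \<open>1 \<le> k\<close> \<open>0 < k'\<close> by (intro psd_msmult) simp_all
    show "psd (ptransA ?PI')"
      unfolding ptI' using \<open>b / k \<le> a\<close> \<open>0 \<le> b\<close> \<open>1 \<le> k\<close>
      by (intro psd_mcomb [OF psd_ptI psd_pt]) simp_all
    show "mtrace (mcomb (k'\<^sup>2) ?PI' k' ?PV') = 1"
      using trace \<open>0 < k'\<close> by (simp add: rescaled_pair_invariant [OF coeffs])
    show "apply_A L (mcomb k' ?PI' 1 ?PV') = tensor Y (ptraceA (mcomb k' ?PI' 1 ?PV'))"
      unfolding channel' apply_A_msmult [OF L] ptraceA_msmult tensor_msmult channel ..
  qed
qed

lemma rescaling_coefficients: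
  fixes k k' :: real
  assumes "1 \<le> k" "k \<le> k'"
  obtains a b where "0 \<le> b" "b \<le> a" "k' * a + b = k\<^sup>2 / k'" "a + k' * b = k / k'"
proof (cases "k' = k")
  case True
  with \<open>1 \<le> k\<close> show ?thesis
    by (intro that [where a = 1 and b = 0]) (simp_all add: power2_eq_square)
next
  case False
  then have "1 < k'" using assms by simp
  then have "0 < k'\<^sup>2 - 1"
    by (simp add: power2_eq_square less_1_mult)
  define D where "D = k' * (k'\<^sup>2 - 1)"
  have "0 < D" using \<open>1 < k'\<close> \<open>0 < k'\<^sup>2 - 1\<close> by (simp add: D_def)
  define a where "a = k * (k * k' - 1) / D"
  define b where "b = k * (k' - k) / D"
  have "0 \<le> b" using \<open>0 < D\<close> assms by (simp add: b_def)
  moreover have "k' - k \<le> k * k' - 1"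
    using assms mult_nonneg_nonneg [of "k - 1" "k' + 1"] by (simp add: algebra_simps)
  then have "b \<le> a"
    using \<open>0 < D\<close> assms by (simp add: a_def b_def divide_right_mono)
  moreover have "k' * a + b = k\<^sup>2 * (k'\<^sup>2 - 1) / D"
    by (simp add: a_def b_def add_divide_distrib [symmetric] power2_eq_square algebra_simps)
  then have "k' * a + b = k\<^sup>2 / k'"
    using \<open>0 < k'\<^sup>2 - 1\<close> by (simp add: D_def)
  moreover have "a + k' * b = k * (k'\<^sup>2 - 1) / D"
    by (simp add: a_def b_def add_divide_distrib [symmetric] power2_eq_square algebra_simps)
  then have "a + k' * b = k / k'"
    using \<open>0 < k'\<^sup>2 - 1\<close> by (simp add: D_def)
  ultimately show ?thesis by (rule that)
qed

theorem mainTheorem12: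
  fixes L :: "('n::finite) cmat \<Rightarrow> ('m::finite) cmat"
    and Y :: "'m cmat"
    and k :: real
    and PI PV :: "('n \<times> 'n) cmat"
  assumes "clinear_map L"
    and "k \<ge> 1"
    and "k_feasible L Y k PI PV"
  shows "\<forall>k'::real. k' \<ge> k \<longrightarrow>
           (\<exists>PI' PV'. k_feasible L Y k' PI' PV' \<and>
              madd (msmult (complex_of_real (k'^2)) PI') (msmult (complex_of_real k') PV')
              = madd (msmult (complex_of_real (k^2)) PI) (msmult (complex_of_real k) PV))"
proof (intro allI impI)
  fix k' :: real
  assume "k \<le> k'"
  then obtain a b where ab: "0 \<le> b" "b \<le> a"
    and coeffs: "k' * a + b = k\<^sup>2 / k'" "a + k' * b = k / k'"
    using \<open>1 \<le> k\<close> rescaling_coefficients by blast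
  have "0 < k'" using \<open>1 \<le> k\<close> \<open>k \<le> k'\<close> by simp
  then have "k_feasible L Y k' (mcomb a PI b PV) (mcomb b PI a PV)"
    using assms ab coeffs by (intro k_feasible_rescale) simp_all
  moreover have "mcomb (k'\<^sup>2) (mcomb a PI b PV) k' (mcomb b PI a PV) = mcomb (k\<^sup>2) PI k PV"
    using coeffs \<open>0 < k'\<close> by (simp add: rescaled_pair_invariant)
  ultimately show "\<exists>PI' PV'. k_feasible L Y k' PI' PV' \<and>
      madd (msmult (complex_of_real (k'^2)) PI') (msmult (complex_of_real k') PV')
      = madd (msmult (complex_of_real (k^2)) PI) (msmult (complex_of_real k) PV)"
    unfolding mcomb_def by blast
qed

end
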